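(* Let $(\Omega,\mathcal F,\mu)$ be a measure space, $p\in[1,\infty)$, $f\in L^p(\Omega,\mathcal F,\mu)$, and $1\le m<k$ integers. If there exists $g\in\mathscr G_{p,m}$ with $\|f-g\|_p=\mathscr D_{p,k}(f)$, then $f\in\mathscr G_{p,m}$ (i.e. $f$ coincides $\mu$-a.e. with an element of $\mathscr G_{p,m}$).
   Context: All measures are assumed not identically zero. $\mathscr G_{p,k}$ is the set of functions $\sum_{i=1}^l a_i\mathbf 1_{A_i}\in L^p$ with $l\le k$, $\{A_i\}$ a measurable partition of $\Omega$, $a_i\in\mathbb R$; $\mathscr D_{p,k}(f)=\inf\{\|f-h\|_p:\ h\in\mathscr G_{p,k}\}$. *)

theory Defs
  imports "HOL-Analysis.Analysis"
begin

definition memLp :: "'a measure \<Rightarrow> real \<Rightarrow> ('a \<Rightarrow> real) \<Rightarrow> bool" where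
  "memLp M p f \<longleftrightarrow> f \<in> borel_measurable M \<and> integrable M (\<lambda>x. \<bar>f x\<bar> powr p)"

definition Lp_norm :: "'a measure \<Rightarrow> real \<Rightarrow> ('a \<Rightarrow> real) \<Rightarrow> real" where
  "Lp_norm M p f = (integral\<^sup>L M (\<lambda>x. \<bar>f x\<bar> powr p)) powr (1 / p)"

definition Gpk :: "'a measure \<Rightarrow> real \<Rightarrow> nat \<Rightarrow> ('a \<Rightarrow> real) set" where
  "Gpk M p k = {h. memLp M p h \<and>
     (\<exists>l::nat. \<exists>a::nat \<Rightarrow> real. \<exists>A::nat \<Rightarrow> 'a set.
        l \<le> k \<and> (\<forall>i<l. A i \<in> sets M) \<and> disjoint_family_on A {..<l} \<and>
        (\<Union>i<l. A i) = space M \<and>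
        (\<forall>x. h x = (\<Sum>i<l. a i * indicator (A i) x)))}"

definition Dpk :: "'a measure \<Rightarrow> real \<Rightarrow> nat \<Rightarrow> ('a \<Rightarrow> real) \<Rightarrow> real" where
  "Dpk M p k f = Inf {Lp_norm M p (\<lambda>x. f x - h x) | h. h \<in> Gpk M p k}"

end

theory Submission
  imports Defs
begin

text \<open>
  Suppose \<open>g \<in> \<G>\<^sub>p\<^sub>,\<^sub>m\<close> attains \<open>\<D>\<^sub>p\<^sub>,\<^sub>k(f)\<close> but \<open>f \<noteq> g\<close> on a set of positive measure.
  Since \<open>g\<close> takes finitely many values, some level set of \<open>g\<close> contains a set \<open>B\<close> of
  positive measure on which \<open>f - g\<close> keeps a fixed sign and stays \<open>\<epsilon>\<close> away from 0.
  Moving \<open>g\<close> by \<open>\<plusminus>\<epsilon>\<close> on \<open>B\<close> costs only one extra cell, so the result lies in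
  \<open>\<G>\<^sub>p\<^sub>,\<^sub>m\<^sub>+\<^sub>1 \<subseteq> \<G>\<^sub>p\<^sub>,\<^sub>k\<close>, and it is strictly closer to \<open>f\<close> in \<open>L\<^sup>p\<close>: a contradiction.
\<close>

lemma abs_diff_powr_le:
  fixes x y p :: real
  assumes "0 \<le> p"
  shows "\<bar>x - y\<bar> powr p \<le> 2 powr p * (\<bar>x\<bar> powr p + \<bar>y\<bar> powr p)"
proof -
  have "\<bar>x - y\<bar> powr p \<le> (2 * max \<bar>x\<bar> \<bar>y\<bar>) powr p"
    by (intro powr_mono2 assms) auto
  also have "\<dots> = 2 powr p * max \<bar>x\<bar> \<bar>y\<bar> powr p"
    by (simp add: powr_mult)
  also have "\<dots> \<le> 2 powr p * (\<bar>x\<bar> powr p + \<bar>y\<bar> powr p)"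
    by (intro mult_left_mono) (auto simp: max_def)
  finally show ?thesis .
qed

lemma memLp_diff:
  assumes "0 \<le> p" "memLp M p f" "memLp M p g"
  shows "memLp M p (\<lambda>x. f x - g x)"
proof -
  have meas: "f \<in> borel_measurable M" "g \<in> borel_measurable M"
    and int: "integrable M (\<lambda>x. \<bar>f x\<bar> powr p)" "integrable M (\<lambda>x. \<bar>g x\<bar> powr p)"
    using assms by (auto simp: memLp_def)
  have "integrable M (\<lambda>x. \<bar>f x - g x\<bar> powr p)"
  proof (rule Bochner_Integration.integrable_bound)
    show "integrable M (\<lambda>x. 2 powr p * (\<bar>f x\<bar> powr p + \<bar>g x\<bar> powr p))"
      using int by auto
    show "(\<lambda>x. \<bar>f x - g x\<bar> powr p) \<in> borel_measurable M"
      using meas by measurable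
    show "AE x in M. norm (\<bar>f x - g x\<bar> powr p) \<le> norm (2 powr p * (\<bar>f x\<bar> powr p + \<bar>g x\<bar> powr p))"
      using abs_diff_powr_le[OF assms(1)] by auto
  qed
  then show ?thesis
    using meas by (auto simp: memLp_def)
qed

lemma memLp_dominated:
  assumes "0 \<le> p" "memLp M p w" "u \<in> borel_measurable M" "\<And>x. \<bar>u x\<bar> \<le> \<bar>w x\<bar>"
  shows "memLp M p u"
proof -
  have "integrable M (\<lambda>x. \<bar>u x\<bar> powr p)"
  proof (rule Bochner_Integration.integrable_bound)
    show "integrable M (\<lambda>x. \<bar>w x\<bar> powr p)"
      using assms(2) by (simp add: memLp_def)
    show "(\<lambda>x. \<bar>u x\<bar> powr p) \<in> borel_measurable M"
      using assms(3) by measurable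
    show "AE x in M. norm (\<bar>u x\<bar> powr p) \<le> norm (\<bar>w x\<bar> powr p)"
      using assms(1,4) by (auto intro!: powr_mono2)
  qed
  then show ?thesis
    using assms(3) by (simp add: memLp_def)
qed

lemma Lp_norm_strict_mono:
  assumes "0 < p" "memLp M p w" "u \<in> borel_measurable M" "\<And>x. \<bar>u x\<bar> \<le> \<bar>w x\<bar>"
    and "B \<in> sets M" "emeasure M B \<noteq> 0" "\<And>x. x \<in> B \<Longrightarrow> \<bar>u x\<bar> < \<bar>w x\<bar>"
  shows "Lp_norm M p u < Lp_norm M p w"
proof -
  define d where "d x = \<bar>w x\<bar> powr p - \<bar>u x\<bar> powr p" for x
  have int_w: "integrable M (\<lambda>x. \<bar>w x\<bar> powr p)"
    using assms(2) by (simp add: memLp_def)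
  have int_u: "integrable M (\<lambda>x. \<bar>u x\<bar> powr p)"
    using memLp_dominated[of p M w u] assms(1-4) by (simp add: memLp_def)
  have int_d: "integrable M d"
    using int_w int_u unfolding d_def by auto
  have d_nonneg: "AE x in M. 0 \<le> d x"
    using assms(1,4) by (auto simp: d_def intro!: powr_mono2)
  have d_pos: "0 < d x" if "x \<in> B" for x
    using assms(1) assms(7)[OF that] by (simp add: d_def powr_less_mono2)
  have "integral\<^sup>L M d \<noteq> 0"
  proof
    assume "integral\<^sup>L M d = 0"
    then have "AE x in M. d x = 0"
      using integral_nonneg_eq_0_iff_AE[OF int_d d_nonneg] by simp
    then have "AE x in M. x \<notin> B"
      by eventually_elim (use d_pos in fastforce)
    then have "B \<in> null_sets M"
      by (simp add: AE_iff_null_sets[OF assms(5)])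
    with assms(6) show False
      by (simp add: null_sets_def)
  qed
  moreover have "0 \<le> integral\<^sup>L M d"
    using d_nonneg by (rule integral_nonneg_AE)
  ultimately have "integral\<^sup>L M (\<lambda>x. \<bar>u x\<bar> powr p) < integral\<^sup>L M (\<lambda>x. \<bar>w x\<bar> powr p)"
    using int_w int_u unfolding d_def by simp
  moreover have "0 \<le> integral\<^sup>L M (\<lambda>x. \<bar>u x\<bar> powr p)"
    by (rule integral_nonneg_AE) auto
  ultimately show ?thesis
    unfolding Lp_norm_def using assms(1) by (intro powr_less_mono2) auto
qed

lemma Dpk_le_Lp_norm:
  assumes "h \<in> Gpk M p k"
  shows "Dpk M p k f \<le> Lp_norm M p (\<lambda>x. f x - h x)"
  unfolding Dpk_def
proof (rule cInf_lower)
  show "Lp_norm M p (\<lambda>x. f x - h x) \<in> {Lp_norm M p (\<lambda>x. f x - h x) |h. h \<in> Gpk M p k}"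
    using assms by blast
  show "bdd_below {Lp_norm M p (\<lambda>x. f x - h x) |h. h \<in> Gpk M p k}"
    by (rule bdd_belowI[of _ 0]) (auto simp: Lp_norm_def)
qed

lemma Gpk_mono:
  assumes "k \<le> k'"
  shows "Gpk M p k \<subseteq> Gpk M p k'"
proof
  fix h
  assume "h \<in> Gpk M p k"
  then show "h \<in> Gpk M p k'"
    using assms unfolding Gpk_def by (blast intro: order.trans)
qed

lemma Gpk_finite_range:
  assumes "h \<in> Gpk M p k"
  shows "finite (h ` space M)"
proof -
  obtain l a and A :: "nat \<Rightarrow> 'a set" where h: "\<And>x. h x = (\<Sum>i<l. a i * indicator (A i) x)"
    using assms unfolding Gpk_def by blast
  have "h x = sum a {i \<in> {..<l}. x \<in> A i}" for x
    unfolding h by (rule sum.mono_neutral_cong_right) (auto simp: indicator_def)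
  then have "h ` space M \<subseteq> sum a ` Pow {..<l}"
    by auto
  then show ?thesis
    by (rule finite_subset) simp
qed

lemma Gpk_add_indicator:
  assumes g: "g \<in> Gpk M p k" and B: "B \<in> sets M" "\<And>x. x \<in> B \<Longrightarrow> g x = v"
    and h_Lp: "memLp M p (\<lambda>x. g x + c * indicator B x)"
  shows "(\<lambda>x. g x + c * indicator B x) \<in> Gpk M p (Suc k)"
proof -
  obtain l a and A :: "nat \<Rightarrow> 'a set" where l: "l \<le> k" and A_sets: "\<forall>i<l. A i \<in> sets M"
    and A_disj: "disjoint_family_on A {..<l}" and A_cover: "(\<Union>i<l. A i) = space M"
    and g_eq: "\<And>x. g x = (\<Sum>i<l. a i * indicator (A i) x)"
    using g unfolding Gpk_def by blast
  define A' where "A' i = (if i = l then B else A i - B)" for i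
  define a' where "a' i = (if i = l then v + c else a i)" for i
  have "\<forall>i<Suc l. A' i \<in> sets M"
    using A_sets B(1) by (auto simp: A'_def less_Suc_eq)
  moreover have "disjoint_family_on A' {..<Suc l}"
    using A_disj unfolding disjoint_family_on_def A'_def by (auto simp: less_Suc_eq; blast)
  moreover have "(\<Union>i<Suc l. A' i) = space M"
    using A_cover sets.sets_into_space[OF B(1)]
    by (auto simp: A'_def lessThan_Suc)
  moreover have "g x + c * indicator B x = (\<Sum>i<Suc l. a' i * indicator (A' i) x)" for x
  proof (cases "x \<in> B")
    case True
    then show ?thesis
      using B(2) by (simp add: a'_def A'_def)
  next
    case False
    then show ?thesis
      by (simp add: a'_def A'_def g_eq indicator_def)
  qed
  ultimately show ?thesis
    using l h_Lp unfolding Gpk_def by (intro CollectI conjI exI[of _ "Suc l"] exI) auto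
qed

text \<open>
  The sets \<open>{g = v, s (f - g) > 1 / (n + 1)}\<close> with \<open>s = \<plusminus>1\<close> form a countable cover of
  \<open>{f \<noteq> g}\<close>, so one of them has positive measure; on it, shifting \<open>g\<close> by \<open>s / (n + 1)\<close>
  brings it strictly closer to \<open>f\<close>.
\<close>

lemma ex_level_set_improvable:
  fixes f g :: "'a \<Rightarrow> real"
  assumes f: "f \<in> borel_measurable M" and g: "g \<in> borel_measurable M"
    and countable: "countable (g ` space M)" and ne: "\<not> (AE x in M. f x = g x)"
  obtains v c B where "B \<in> sets M" "emeasure M B \<noteq> 0" "\<And>x. x \<in> B \<Longrightarrow> g x = v"
    "\<And>x. x \<in> B \<Longrightarrow> \<bar>f x - (g x + c)\<bar> < \<bar>f x - g x\<bar>"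
proof -
  define I where "I = g ` space M \<times> (UNIV :: nat set) \<times> {-1, 1 :: real}"
  define D where "D = (\<lambda>(v, n, s). {x \<in> space M. g x = v \<and> s * (f x - g x) > 1 / Suc n})"
  have D_sets: "D t \<in> sets M" for t
    using f g unfolding D_def by (cases t) simp
  have "\<exists>t\<in>I. emeasure M (D t) \<noteq> 0"
  proof (rule ccontr)
    assume "\<not> ?thesis"
    then have "(\<Union>t\<in>I. D t) \<in> null_sets M"
      using D_sets countable by (intro null_sets_UN') (auto simp: I_def null_sets_def)
    then have "AE x in M. x \<notin> (\<Union>t\<in>I. D t)"
      by (rule AE_not_in)
    moreover have "f x = g x" if x: "x \<in> space M" "x \<notin> (\<Union>t\<in>I. D t)" for x
    proof (rule ccontr)
      assume "f x \<noteq> g x"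
      then obtain n where n: "1 / real (Suc n) < \<bar>f x - g x\<bar>"
        using reals_Archimedean[of "\<bar>f x - g x\<bar>"] by (auto simp: inverse_eq_divide)
      define s :: real where "s = (if f x - g x > 0 then 1 else -1)"
      have "x \<in> D (g x, n, s)"
        using x(1) n by (auto simp: D_def s_def)
      moreover have "(g x, n, s) \<in> I"
        using x(1) by (simp add: I_def s_def)
      ultimately show False
        using x(2) by blast
    qed
    ultimately have "AE x in M. f x = g x"
      by auto
    with ne show False ..
  qed
  then obtain v n s where t: "(v, n, s) \<in> I" "emeasure M (D (v, n, s)) \<noteq> 0"
    by auto
  have shift_closer: "\<bar>d - s' * e\<bar> < \<bar>d\<bar>" if "s' = 1 \<or> s' = -1" "e < s' * d" "0 < e"
    for d e s' :: real
    using that by auto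
  show ?thesis
  proof (rule that[of "D (v, n, s)" v "s * (1 / Suc n)"])
    fix x
    assume x: "x \<in> D (v, n, s)"
    then show "g x = v"
      by (simp add: D_def)
    have "s = 1 \<or> s = -1" "1 / Suc n < s * (f x - g x)"
      using t(1) x by (auto simp: I_def D_def)
    then have "\<bar>f x - g x - s * (1 / Suc n)\<bar> < \<bar>f x - g x\<bar>"
      by (rule shift_closer) simp
    then show "\<bar>f x - (g x + s * (1 / Suc n))\<bar> < \<bar>f x - g x\<bar>"
      by (simp only: diff_diff_eq)
  qed (use t D_sets in auto)
qed

theorem proposition2p16:
  fixes M :: "'a measure" and p :: real and f :: "'a \<Rightarrow> real" and m k :: nat
  assumes "emeasure M (space M) \<noteq> 0"
    and "1 \<le> p"
    and "memLp M p f"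
    and "1 \<le> m" and "m < k"
    and "\<exists>g \<in> Gpk M p m. Lp_norm M p (\<lambda>x. f x - g x) = Dpk M p k f"
  shows "\<exists>h \<in> Gpk M p m. AE x in M. f x = h x"
proof -
  obtain g where g: "g \<in> Gpk M p m" and g_opt: "Lp_norm M p (\<lambda>x. f x - g x) = Dpk M p k f"
    using assms(6) by blast
  have p: "0 < p" "0 \<le> p"
    using assms(2) by auto
  have g_Lp: "memLp M p g" and f_meas: "f \<in> borel_measurable M" and g_meas: "g \<in> borel_measurable M"
    using g assms(3) by (auto simp: Gpk_def memLp_def)
  have fg_Lp: "memLp M p (\<lambda>x. f x - g x)"
    using memLp_diff[OF p(2) assms(3) g_Lp] .
  show ?thesis
  proof (rule ccontr)
    assume "\<not> ?thesis"
    with g have "\<not> (AE x in M. f x = g x)"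
      by blast
    then obtain v c B where B: "B \<in> sets M" "emeasure M B \<noteq> 0" "\<And>x. x \<in> B \<Longrightarrow> g x = v"
      and closer: "\<And>x. x \<in> B \<Longrightarrow> \<bar>f x - (g x + c)\<bar> < \<bar>f x - g x\<bar>"
      using ex_level_set_improvable[OF f_meas g_meas] countable_finite[OF Gpk_finite_range[OF g]]
      by metis
    define h where "h x = g x + c * indicator B x" for x
    have h_meas: "(\<lambda>x. f x - h x) \<in> borel_measurable M"
      using f_meas g_meas B(1) unfolding h_def by measurable
    have h_le: "\<bar>f x - h x\<bar> \<le> \<bar>f x - g x\<bar>" for x
      using closer[of x] by (cases "x \<in> B") (auto simp: h_def)
    have "memLp M p (\<lambda>x. f x - (f x - h x))"
      using memLp_diff[OF p(2) assms(3) memLp_dominated[OF p(2) fg_Lp h_meas h_le]] .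
    then have "h \<in> Gpk M p k"
      using Gpk_add_indicator[OF g B(1,3)] Gpk_mono[of "Suc m" k M p] assms(5)
      unfolding h_def by auto
    then have "Lp_norm M p (\<lambda>x. f x - g x) \<le> Lp_norm M p (\<lambda>x. f x - h x)"
      unfolding g_opt by (rule Dpk_le_Lp_norm)
    moreover have "Lp_norm M p (\<lambda>x. f x - h x) < Lp_norm M p (\<lambda>x. f x - g x)"
      using Lp_norm_strict_mono[OF p(1) fg_Lp h_meas h_le B(1,2)] closer
      by (simp add: h_def)
    ultimately show False
      by simp
  qed
qed

end
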